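(* Stable semantics is serialisable with the selection function $\alpha_{adm}(X,Y,Z)=X\cup Y\cup Z$ and the termination function $\beta_{st}(F,S)=1$ if $F=(\emptyset,\emptyset)$ and $\beta_{st}(F,S)=0$ otherwise.
   Context: An abstract argumentation framework (AF) is a pair $F=(A,R)$ with $A$ a finite subset of a fixed universal set of arguments $\mathfrak{A}$ and $R\subseteq A\times A$ ($a\to b$ means $(a,b)\in R$). For $S\subseteq A$: $S^+=\{a\mid \exists b\in S: b\to a\}$, $S^-=\{a\mid\exists b\in S: a\to b\}$; for sets $S,S'$, $S\to S'$ means $S^+\cap S'\neq\emptyset$. $S$ is admissible if it is conflict-free and every attacker of an element of $S$ is attacked by some element of $S$. A stable extension is an admissible set $E$ with $E\cup E^+=A$. An initial set is a non-empty admissible set with no non-empty admissible proper subset; $\mathrm{IS}(F)$ is the set of initial sets. An initial set $S$ is unattacked if $S^-=\emptyset$; unchallenged if $S^-\neq\emptyset$ and no $S'\in\mathrm{IS}(F)$ has $S'\to S$; challenged if some $S'\in\mathrm{IS}(F)$ has $S'\to S$. Write $\mathrm{IS}^{u}(F),\mathrm{IS}^{uc}(F),\mathrm{IS}^{c}(F)$ for these sets. The reduct is $F^S=(A',R\cap(A'\times A'))$ with $A'=A\setminus(S\cup S^+)$. A selection function $\alpha$ maps any three sets $X,Y,Z$ of sets of arguments to a subset of $X\cup Y\cup Z$; a termination function $\beta$ maps pairs $(F,S)$ to $\{0,1\}$. Transitions: $(F,S)\to(F^{S'},S\cup S')$ whenever $S'\in\alpha(\mathrm{IS}^u(F),\mathrm{IS}^{uc}(F),\mathrm{IS}^c(F))$.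 $(F,S)\leadsto^{\alpha,\beta}(F',S')$ means $(F',S')$ is reachable from $(F,S)$ in finitely many (possibly zero) transitions and $\beta(F',S')=1$. $\mathcal{E}^{\alpha,\beta}(F)$ is the set of all $S$ with $(F,\emptyset)\leadsto^{\alpha,\beta}(F',S)$ for some $F'$. A semantics $\sigma$ is serialisable with $\alpha,\beta$ if $\sigma(F)=\mathcal{E}^{\alpha,\beta}(F)$ for all AFs $F$. *)

theory Defs
  imports Main
begin

type_synonym 'a AF = "'a set \<times> ('a \<times> 'a) set"

definition is_AF :: "'a AF \<Rightarrow> bool" where
  "is_AF F \<longleftrightarrow> finite (fst F) \<and> snd F \<subseteq> fst F \<times> fst F"

definition plus_of :: "('a \<times> 'a) set \<Rightarrow> 'a set \<Rightarrow> 'a set" where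
  "plus_of R S = {a. \<exists>b\<in>S. (b, a) \<in> R}"

definition minus_of :: "('a \<times> 'a) set \<Rightarrow> 'a set \<Rightarrow> 'a set" where
  "minus_of R S = {a. \<exists>b\<in>S. (a, b) \<in> R}"

definition attacks_set :: "('a \<times> 'a) set \<Rightarrow> 'a set \<Rightarrow> 'a set \<Rightarrow> bool" where
  "attacks_set R S S' \<longleftrightarrow> plus_of R S \<inter> S' \<noteq> {}"

definition conflict_free :: "'a AF \<Rightarrow> 'a set \<Rightarrow> bool" where
  "conflict_free F S \<longleftrightarrow> (\<forall>a\<in>S. \<forall>b\<in>S. (a, b) \<notin> snd F)"

definition admissible :: "'a AF \<Rightarrow> 'a set \<Rightarrow> bool" where
  "admissible F S \<longleftrightarrow> S \<subseteq> fst F \<and> conflict_free F S \<and>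
     (\<forall>a\<in>S. \<forall>b. (b, a) \<in> snd F \<longrightarrow> (\<exists>c\<in>S. (c, b) \<in> snd F))"

definition stable :: "'a AF \<Rightarrow> 'a set set" where
  "stable F = {E. admissible F E \<and> E \<union> plus_of (snd F) E = fst F}"

definition initial_sets :: "'a AF \<Rightarrow> 'a set set" where
  "initial_sets F = {S. S \<noteq> {} \<and> admissible F S \<and>
     (\<forall>S'. S' \<subset> S \<and> S' \<noteq> {} \<longrightarrow> \<not> admissible F S')}"

definition IS_u :: "'a AF \<Rightarrow> 'a set set" where
  "IS_u F = {S \<in> initial_sets F. minus_of (snd F) S = {}}"

definition IS_uc :: "'a AF \<Rightarrow> 'a set set" where
  "IS_uc F = {S \<in> initial_sets F. minus_of (snd F) S \<noteq> {} \<and>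
     \<not> (\<exists>S'\<in>initial_sets F. attacks_set (snd F) S' S)}"

definition IS_c :: "'a AF \<Rightarrow> 'a set set" where
  "IS_c F = {S \<in> initial_sets F. \<exists>S'\<in>initial_sets F. attacks_set (snd F) S' S}"

definition reduct :: "'a AF \<Rightarrow> 'a set \<Rightarrow> 'a AF" where
  "reduct F S = (let A' = fst F - (S \<union> plus_of (snd F) S) in (A', snd F \<inter> (A' \<times> A')))"

type_synonym 'a sel_fun = "'a set set \<Rightarrow> 'a set set \<Rightarrow> 'a set set \<Rightarrow> 'a set set"
type_synonym 'a term_fun = "'a AF \<Rightarrow> 'a set \<Rightarrow> bool"

definition step :: "'a sel_fun \<Rightarrow> ('a AF \<times> 'a set) \<Rightarrow> ('a AF \<times> 'a set) \<Rightarrow> bool" where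
  "step \<alpha> c c' \<longleftrightarrow> (\<exists>S'. S' \<in> \<alpha> (IS_u (fst c)) (IS_uc (fst c)) (IS_c (fst c)) \<and>
      c' = (reduct (fst c) S', snd c \<union> S'))"

definition serial_ext :: "'a sel_fun \<Rightarrow> 'a term_fun \<Rightarrow> 'a AF \<Rightarrow> 'a set set" where
  "serial_ext \<alpha> \<beta> F = {S. \<exists>F'. (step \<alpha>)\<^sup>*\<^sup>* (F, {}) (F', S) \<and> \<beta> F' S}"

definition serialisable :: "('a AF \<Rightarrow> 'a set set) \<Rightarrow> 'a sel_fun \<Rightarrow> 'a term_fun \<Rightarrow> bool" where
  "serialisable \<sigma> \<alpha> \<beta> \<longleftrightarrow> (\<forall>F. is_AF F \<longrightarrow> \<sigma> F = serial_ext \<alpha> \<beta> F)"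

definition alpha_adm :: "'a sel_fun" where
  "alpha_adm X Y Z = X \<union> Y \<union> Z"

definition beta_st :: "'a term_fun" where
  "beta_st F S \<longleftrightarrow> F = ({}, {})"

end

theory Submission
  imports Defs
begin

(* Since alpha_adm may select any initial set, and taking the reduct by S and then by S'
   is the same as taking the reduct by S \<union> S', the states reachable from (F, {}) are
   exactly the pairs (F^S, S) with S admissible. Soundness: S \<union> S' is admissible whenever
   S' is admissible in F^S. Completeness: for admissible E \<supseteq> T the set E - T is admissible
   in F^T, so if it is non-empty it contains an initial set of F^T, and E is reached by
   induction on |E - T|. Finally, an admissible S is stable iff F^S is the empty framework. *)

lemma alpha_adm_initial_sets: "alpha_adm (IS_u F) (IS_uc F) (IS_c F) = initial_sets F"
  unfolding alpha_adm_def IS_u_def IS_uc_def IS_c_def by auto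

lemma step_alpha_adm_iff:
  "step alpha_adm (F, S) c \<longleftrightarrow> (\<exists>S'\<in>initial_sets F. c = (reduct F S', S \<union> S'))"
  unfolding step_def alpha_adm_initial_sets by auto

lemma reduct_empty: "snd F \<subseteq> fst F \<times> fst F \<Longrightarrow> reduct F {} = F"
  unfolding reduct_def plus_of_def by (cases F) auto

lemma reduct_reduct:
  assumes "S' \<subseteq> fst (reduct F S)"
  shows "reduct (reduct F S) S' = reduct F (S \<union> S')"
  using assms unfolding reduct_def plus_of_def Let_def by (cases F) (auto 4 3)

lemma admissible_empty: "admissible F {}"
  unfolding admissible_def conflict_free_def by simp

(* A defender of E - S against an attacker surviving in the reduct lies neither in S
   (the attacker would be in S^+) nor in S^+ (E is conflict-free). *)
lemma admissible_reduct_diff: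
  assumes "admissible F E" "S \<subseteq> E"
  shows "admissible (reduct F S) (E - S)"
  using assms unfolding admissible_def conflict_free_def reduct_def plus_of_def Let_def
  by (cases F) (simp, blast)

lemma admissible_union_reduct:
  assumes rel: "snd F \<subseteq> fst F \<times> fst F"
    and S: "admissible F S" and S': "admissible (reduct F S) S'"
  shows "admissible F (S \<union> S')"
proof -
  obtain A R where F: "F = (A, R)" by fastforce
  define A' where "A' = A - (S \<union> plus_of R S)"
  have red: "reduct F S = (A', R \<inter> A' \<times> A')"
    unfolding F A'_def reduct_def Let_def by simp
  have "S \<subseteq> A" using S unfolding F admissible_def by simp
  have S'_A': "S' \<subseteq> A'" using S' unfolding red admissible_def by simp
  have S_defends: "\<exists>c\<in>S. (c, b) \<in> R" if "a \<in> S" "(b, a) \<in> R" for a b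
    using S that unfolding F admissible_def by simp
  have S'_defends: "\<exists>c\<in>S'. (c, b) \<in> R" if "a \<in> S'" "(b, a) \<in> R" "b \<in> A'" for a b
    using S' that S'_A' unfolding red admissible_def fst_conv snd_conv by blast
  have S_not_attacks_S': "(a, b) \<notin> R" if "a \<in> S" "b \<in> S'" for a b
    using that S'_A' unfolding A'_def plus_of_def by blast
  have S'_not_attacks_S: "(a, b) \<notin> R" if "a \<in> S'" "b \<in> S" for a b
  proof
    assume "(a, b) \<in> R"
    then have "a \<in> plus_of R S"
      using S_defends[OF \<open>b \<in> S\<close>] unfolding plus_of_def by blast
    then show False using \<open>a \<in> S'\<close> S'_A' unfolding A'_def by blast
  qed
  have S_conflict_free: "(a, b) \<notin> R" if "a \<in> S" "b \<in> S" for a b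
    using S that unfolding F admissible_def conflict_free_def by simp
  have S'_conflict_free: "(a, b) \<notin> R" if "a \<in> S'" "b \<in> S'" for a b
    using S' that S'_A' unfolding red admissible_def conflict_free_def snd_conv by blast
  have "conflict_free F (S \<union> S')"
    using S_conflict_free S'_conflict_free S_not_attacks_S' S'_not_attacks_S
    unfolding F conflict_free_def snd_conv by blast
  moreover have "\<exists>c\<in>S \<union> S'. (c, b) \<in> R" if "a \<in> S \<union> S'" "(b, a) \<in> R" for a b
  proof (cases "a \<in> S")
    case True
    then show ?thesis using S_defends \<open>(b, a) \<in> R\<close> by blast
  next
    case False
    then have "a \<in> S'" using that by blast
    have "b \<in> A" using rel \<open>(b, a) \<in> R\<close> unfolding F by auto
    moreover have "b \<notin> S" using S_not_attacks_S' \<open>a \<in> S'\<close> \<open>(b, a) \<in> R\<close> by blast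
    ultimately consider "b \<in> plus_of R S" | "b \<in> A'" unfolding A'_def by blast
    then show ?thesis
    proof cases
      case 1
      then show ?thesis unfolding plus_of_def by blast
    next
      case 2
      then show ?thesis using S'_defends \<open>a \<in> S'\<close> \<open>(b, a) \<in> R\<close> by blast
    qed
  qed
  ultimately show ?thesis
    using \<open>S \<subseteq> A\<close> S'_A' unfolding F admissible_def A'_def fst_conv snd_conv by blast
qed

lemma initial_set_inside_admissible:
  assumes "finite E" "E \<noteq> {}" "admissible F E"
  obtains S where "S \<subseteq> E" "S \<in> initial_sets F"
proof -
  let ?C = "{T. T \<subseteq> E \<and> T \<noteq> {} \<and> admissible F T}"
  have "finite ?C"
    by (rule finite_subset[of _ "Pow E"]) (use assms(1) in auto)
  moreover have "E \<in> ?C" using assms by simp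
  ultimately obtain S where S: "S \<in> ?C" and min: "\<forall>T\<in>?C. T \<subseteq> S \<longrightarrow> S = T"
    using finite_has_minimal2[of ?C E] by auto
  have "\<not> admissible F T" if "T \<subset> S" "T \<noteq> {}" for T
    using min S that by auto
  then have "S \<in> initial_sets F"
    using S unfolding initial_sets_def by simp
  with S show thesis using that by blast
qed

lemma reachable_from_subset:
  assumes "finite E" "admissible F E" "T \<subseteq> E"
  shows "(step alpha_adm)\<^sup>*\<^sup>* (reduct F T, T) (reduct F E, E)"
  using assms(3)
proof (induction "card (E - T)" arbitrary: T rule: less_induct)
  case less
  show ?case
  proof (cases "T = E")
    case True
    then show ?thesis by simp
  next
    case False
    have "admissible (reduct F T) (E - T)"
      using admissible_reduct_diff[OF assms(2) less.prems] .
    moreover have "E - T \<noteq> {}" using False less.prems by blast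
    moreover have "finite (E - T)" using assms(1) by simp
    ultimately obtain S where S: "S \<subseteq> E - T" "S \<in> initial_sets (reduct F T)"
      using initial_set_inside_admissible by blast
    then have "S \<noteq> {}" and "admissible (reduct F T) S"
      unfolding initial_sets_def by simp_all
    then have "S \<subseteq> fst (reduct F T)"
      unfolding admissible_def by simp
    then have "step alpha_adm (reduct F T, T) (reduct F (T \<union> S), T \<union> S)"
      using S(2) reduct_reduct step_alpha_adm_iff by metis
    moreover have "card (E - (T \<union> S)) < card (E - T)"
      using S(1) \<open>S \<noteq> {}\<close> assms(1) by (intro psubset_card_mono) auto
    then have "(step alpha_adm)\<^sup>*\<^sup>* (reduct F (T \<union> S), T \<union> S) (reduct F E, E)"
      using less.hyps S(1) less.prems by blast
    ultimately show ?thesis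
      by (rule converse_rtranclp_into_rtranclp)
  qed
qed

lemma reachable_imp_admissible:
  assumes "snd F \<subseteq> fst F \<times> fst F" "(step alpha_adm)\<^sup>*\<^sup>* (F, {}) (F', S)"
  shows "admissible F S \<and> F' = reduct F S"
  using assms(2)
proof (induction rule: rtranclp_induct2)
  case refl
  show ?case using reduct_empty[OF assms(1)] admissible_empty by simp
next
  case (step F'' S'' F' S)
  then obtain S0 where S0: "S0 \<in> initial_sets F''" and "F' = reduct F'' S0" "S = S'' \<union> S0"
    by (auto simp: step_alpha_adm_iff)
  moreover have adm: "admissible (reduct F S'') S0"
    using S0 step.IH unfolding initial_sets_def by simp
  moreover have "S0 \<subseteq> fst (reduct F S'')"
    using adm unfolding admissible_def by simp
  ultimately show ?case
    using step.IH reduct_reduct admissible_union_reduct[OF assms(1) _ adm] by simp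
qed

lemma reachable_iff_admissible:
  assumes "is_AF F"
  shows "(step alpha_adm)\<^sup>*\<^sup>* (F, {}) (F', S) \<longleftrightarrow> admissible F S \<and> F' = reduct F S"
proof
  have rel: "snd F \<subseteq> fst F \<times> fst F" using assms unfolding is_AF_def by simp
  show "admissible F S \<and> F' = reduct F S" if "(step alpha_adm)\<^sup>*\<^sup>* (F, {}) (F', S)"
    using reachable_imp_admissible[OF rel that] .
  show "(step alpha_adm)\<^sup>*\<^sup>* (F, {}) (F', S)" if "admissible F S \<and> F' = reduct F S"
  proof -
    have "finite S"
      using assms that finite_subset unfolding is_AF_def admissible_def by blast
    then show ?thesis
      using reachable_from_subset[of S F "{}"] reduct_empty[OF rel] that by simp
  qed
qed

lemma stable_iff_reduct_empty:
  assumes "snd F \<subseteq> fst F \<times> fst F"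
  shows "S \<in> stable F \<longleftrightarrow> admissible F S \<and> reduct F S = ({}, {})"
proof -
  have "S \<union> plus_of (snd F) S \<subseteq> fst F" if "admissible F S"
    using that assms unfolding admissible_def plus_of_def by blast
  then show ?thesis
    unfolding stable_def reduct_def Let_def by auto
qed

theorem theorem5:
  shows "serialisable (stable :: 'a AF \<Rightarrow> 'a set set) alpha_adm beta_st"
  unfolding serialisable_def serial_ext_def beta_st_def
  by (auto simp: reachable_iff_admissible stable_iff_reduct_empty is_AF_def)

end
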